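(* Let $S_4$ be the symmetric group of degree 4. The following d-identities form a basis of d-identities of $S_4$ (i.e. they all hold in $S_4$, and every group satisfying all of them is isomorphic to a section of $S_4$): (1) $\omega_{24}=\bigvee_{0\le i<j\le 24}(x_i=x_j)$; (2) $(x_1^4=1)\vee(x_2^4=1)\vee((x_1x_2)^4=1)\vee((x_1x_2^2)^4=1)$; (3) $(x^3=1)\vee(x^4=1)$; (4) $(x_1^6=1)\vee(x_2^6=1)\vee(x_1=x_2)\vee(x_1x_2=1)\vee((x_1x_2)^3=1)$; (5) $(x_1^3=1)\vee(x_2^3=1)\vee(x_3^3=1)\vee((x_1^{-1}x_2)^3=1)\vee((x_1^{-1}x_3)^3=1)\vee((x_2^{-1}x_3)^3=1)\vee\theta(x_1,x_2,x_3)$.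
   Context: A d-identity (disjunctive identity) is a universally quantified formula $\forall x_1\dots x_k\,[(f_1=1)\vee\dots\vee(f_n=1)]$ with the $f_i$ words in the free group on the variables; $u=v$ abbreviates $uv^{-1}=1$. A group satisfies it if it is true for all assignments. For a group $G$, $\mathrm{dvar}(G)$ is the class of groups satisfying every d-identity satisfied by $G$; for finite $G$ it is the class of groups isomorphic to sections (quotients of subgroups) of $G$. A set of d-identities is a basis of d-identities of $G$ if all its members hold in $G$ and every group satisfying them lies in $\mathrm{dvar}(G)$. Notation: "$u\in\langle v\rangle$" abbreviates $(u=1)\vee(u=v)\vee(u=v^2)\vee(u=v^3)$, and $\theta(z_1,z_2,z_3)$ denotes $\Big[\bigvee_{i\ne j} z_i\in\langle z_j\rangle\Big]\vee\Big[\bigvee_{\sigma\in S_3} z_{\sigma(1)}\in\langle z_{\sigma(2)}z_{\sigma(3)}\rangle\Big]\vee\Big[\bigvee_{\sigma\in S_3} z_{\sigma(1)}z_{\sigma(2)}\in\langle z_{\sigma(2)}z_{\sigma(3)}\rangle\Big]$ with $i,j\in\{1,2,3\}$. *)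

theory Defs
  imports "HOL-Algebra.Sym_Groups"
begin

definition is_section_of :: "('a, 'c) monoid_scheme \<Rightarrow> ('b, 'd) monoid_scheme \<Rightarrow> bool" where
  "is_section_of G K \<longleftrightarrow>
     (\<exists>H N. subgroup H K \<and> N \<lhd> (K\<lparr>carrier := H\<rparr>) \<and> G \<cong> ((K\<lparr>carrier := H\<rparr>) Mod N))"

text \<open>u in <v> abbreviates u = 1 or u = v or u = v^2 or u = v^3.\<close>
definition in_cyc :: "('a, 'c) monoid_scheme \<Rightarrow> 'a \<Rightarrow> 'a \<Rightarrow> bool" where
  "in_cyc G u v \<longleftrightarrow> u = \<one>\<^bsub>G\<^esub> \<or> u = v \<or> u = v [^]\<^bsub>G\<^esub> (2::nat) \<or> u = v [^]\<^bsub>G\<^esub> (3::nat)"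

definition theta :: "('a, 'c) monoid_scheme \<Rightarrow> 'a \<Rightarrow> 'a \<Rightarrow> 'a \<Rightarrow> bool" where
  "theta G z1 z2 z3 \<longleftrightarrow>
     (let z = (\<lambda>i::nat. if i = 1 then z1 else if i = 2 then z2 else z3);
          I = {1,2,3::nat};
          perms = {(a,b,c). a \<in> I \<and> b \<in> I \<and> c \<in> I \<and> a \<noteq> b \<and> a \<noteq> c \<and> b \<noteq> c}
      in (\<exists>i\<in>I. \<exists>j\<in>I. i \<noteq> j \<and> in_cyc G (z i) (z j))
       \<or> (\<exists>(a,b,c)\<in>perms. in_cyc G (z a) (z b \<otimes>\<^bsub>G\<^esub> z c))
       \<or> (\<exists>(a,b,c)\<in>perms. in_cyc G (z a \<otimes>\<^bsub>G\<^esub> z b) (z b \<otimes>\<^bsub>G\<^esub> z c)))"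

definition did1 :: "('a, 'c) monoid_scheme \<Rightarrow> bool" where
  "did1 G \<longleftrightarrow> (\<forall>x :: nat \<Rightarrow> 'a. (\<forall>i\<le>24. x i \<in> carrier G) \<longrightarrow>
                 (\<exists>i j. i < j \<and> j \<le> 24 \<and> x i = x j))"

definition did2 :: "('a, 'c) monoid_scheme \<Rightarrow> bool" where
  "did2 G \<longleftrightarrow> (\<forall>x1\<in>carrier G. \<forall>x2\<in>carrier G.
      x1 [^]\<^bsub>G\<^esub> (4::nat) = \<one>\<^bsub>G\<^esub> \<or> x2 [^]\<^bsub>G\<^esub> (4::nat) = \<one>\<^bsub>G\<^esub>
    \<or> (x1 \<otimes>\<^bsub>G\<^esub> x2) [^]\<^bsub>G\<^esub> (4::nat) = \<one>\<^bsub>G\<^esub>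
    \<or> (x1 \<otimes>\<^bsub>G\<^esub> x2 [^]\<^bsub>G\<^esub> (2::nat)) [^]\<^bsub>G\<^esub> (4::nat) = \<one>\<^bsub>G\<^esub>)"

definition did3 :: "('a, 'c) monoid_scheme \<Rightarrow> bool" where
  "did3 G \<longleftrightarrow> (\<forall>x\<in>carrier G. x [^]\<^bsub>G\<^esub> (3::nat) = \<one>\<^bsub>G\<^esub> \<or> x [^]\<^bsub>G\<^esub> (4::nat) = \<one>\<^bsub>G\<^esub>)"

definition did4 :: "('a, 'c) monoid_scheme \<Rightarrow> bool" where
  "did4 G \<longleftrightarrow> (\<forall>x1\<in>carrier G. \<forall>x2\<in>carrier G.
      x1 [^]\<^bsub>G\<^esub> (6::nat) = \<one>\<^bsub>G\<^esub> \<or> x2 [^]\<^bsub>G\<^esub> (6::nat) = \<one>\<^bsub>G\<^esub>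
    \<or> x1 = x2 \<or> x1 \<otimes>\<^bsub>G\<^esub> x2 = \<one>\<^bsub>G\<^esub>
    \<or> (x1 \<otimes>\<^bsub>G\<^esub> x2) [^]\<^bsub>G\<^esub> (3::nat) = \<one>\<^bsub>G\<^esub>)"

definition did5 :: "('a, 'c) monoid_scheme \<Rightarrow> bool" where
  "did5 G \<longleftrightarrow> (\<forall>x1\<in>carrier G. \<forall>x2\<in>carrier G. \<forall>x3\<in>carrier G.
      x1 [^]\<^bsub>G\<^esub> (3::nat) = \<one>\<^bsub>G\<^esub> \<or> x2 [^]\<^bsub>G\<^esub> (3::nat) = \<one>\<^bsub>G\<^esub>
    \<or> x3 [^]\<^bsub>G\<^esub> (3::nat) = \<one>\<^bsub>G\<^esub>
    \<or> (inv\<^bsub>G\<^esub> x1 \<otimes>\<^bsub>G\<^esub> x2) [^]\<^bsub>G\<^esub> (3::nat) = \<one>\<^bsub>G\<^esub>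
    \<or> (inv\<^bsub>G\<^esub> x1 \<otimes>\<^bsub>G\<^esub> x3) [^]\<^bsub>G\<^esub> (3::nat) = \<one>\<^bsub>G\<^esub>
    \<or> (inv\<^bsub>G\<^esub> x2 \<otimes>\<^bsub>G\<^esub> x3) [^]\<^bsub>G\<^esub> (3::nat) = \<one>\<^bsub>G\<^esub>
    \<or> theta G x1 x2 x3)"

definition S4_dbasis :: "('a, 'c) monoid_scheme \<Rightarrow> bool" where
  "S4_dbasis G \<longleftrightarrow> did1 G \<and> did2 G \<and> did3 G \<and> did4 G \<and> did5 G"

end

theory Submission
  imports Defs "HOL-Algebra.Multiplicative_Group" "HOL-Algebra.Group_Action" "HOL-Algebra.Sylow"
begin

text \<open>
  That the identities hold in $S_4$ is a finite computation, carried out with the permutations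
  of $\{1..4\}$ encoded as lists.

  Conversely, let $G$ satisfy them. Identity (1) says $|G| \leq 24$ and (3) that every element
  has order 1, 2, 3 or 4, which excludes subgroups of prime order $p \geq 5$. Identity (2) excludes
  subgroups of order 9 and, with (3), makes $\langle a \rangle$ the centraliser of every element $a$
  of order 3. In a subgroup of exponent 4, identity (4) leaves at most two elements of order 4,
  while (5) forbids three independent commuting involutions; this excludes subgroups of order 16.
  By Sylow's theorem $|G|$ therefore divides 24. In every case there is a subgroup $H$ of index at
  most 4 containing no nontrivial normal subgroup of $G$: $H = 1$ if $|G| \leq 4$;
  $H = \langle b \rangle$ for a noncentral involution $b$ if $|G| \in \{6, 8\}$; and the normaliser
  of $\langle a \rangle$, $a$ of order 3, if $|G| \in \{12, 24\}$ (for $|G| = 24$, $a$ is conjugate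
  to $a^{-1}$, since otherwise a Sylow 2-subgroup would be normal). The action of $G$ on the cosets
  of $H$ embeds $G$ into $S_4$, and a subgroup is in particular a section.
\<close>

lemma theta_iff:
  "theta G z1 z2 z3 \<longleftrightarrow>
     in_cyc G z1 z2 \<or> in_cyc G z1 z3 \<or> in_cyc G z2 z1 \<or> in_cyc G z2 z3 \<or> in_cyc G z3 z1 \<or> in_cyc G z3 z2
   \<or> in_cyc G z1 (z2 \<otimes>\<^bsub>G\<^esub> z3) \<or> in_cyc G z1 (z3 \<otimes>\<^bsub>G\<^esub> z2) \<or> in_cyc G z2 (z1 \<otimes>\<^bsub>G\<^esub> z3)
   \<or> in_cyc G z2 (z3 \<otimes>\<^bsub>G\<^esub> z1) \<or> in_cyc G z3 (z1 \<otimes>\<^bsub>G\<^esub> z2) \<or> in_cyc G z3 (z2 \<otimes>\<^bsub>G\<^esub> z1)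
   \<or> in_cyc G (z1 \<otimes>\<^bsub>G\<^esub> z2) (z2 \<otimes>\<^bsub>G\<^esub> z3) \<or> in_cyc G (z1 \<otimes>\<^bsub>G\<^esub> z3) (z3 \<otimes>\<^bsub>G\<^esub> z2)
   \<or> in_cyc G (z2 \<otimes>\<^bsub>G\<^esub> z1) (z1 \<otimes>\<^bsub>G\<^esub> z3) \<or> in_cyc G (z2 \<otimes>\<^bsub>G\<^esub> z3) (z3 \<otimes>\<^bsub>G\<^esub> z1)
   \<or> in_cyc G (z3 \<otimes>\<^bsub>G\<^esub> z1) (z1 \<otimes>\<^bsub>G\<^esub> z2) \<or> in_cyc G (z3 \<otimes>\<^bsub>G\<^esub> z2) (z2 \<otimes>\<^bsub>G\<^esub> z1)"
proof -
  have "{(a, b, c). a \<in> {1, 2, 3::nat} \<and> b \<in> {1, 2, 3} \<and> c \<in> {1, 2, 3} \<and> a \<noteq> b \<and> a \<noteq> c \<and> b \<noteq> c}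
      = {(1, 2, 3), (1, 3, 2), (2, 1, 3), (2, 3, 1), (3, 1, 2), (3, 2, 1)}"
    by auto
  then show ?thesis unfolding theta_def Let_def by auto
qed

lemma did1_iff_card_le_24: "did1 G \<longleftrightarrow> finite (carrier G) \<and> card (carrier G) \<le> 24"
proof
  assume did1: "did1 G"
  show "finite (carrier G) \<and> card (carrier G) \<le> 24"
  proof (rule ccontr)
    assume large: "\<not> ?thesis"
    then have "\<exists>S. S \<subseteq> carrier G \<and> finite S \<and> card S = 25"
    proof (cases "finite (carrier G)")
      case True
      then show ?thesis using large obtain_subset_with_card_n[of 25 "carrier G"] by force
    qed (meson infinite_arbitrarily_large)
    then obtain S where S: "S \<subseteq> carrier G" "finite S" "card S = 25" by blast
    then obtain x where x: "bij_betw x {0..<25::nat} S" using ex_bij_betw_nat_finite by metis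
    then have "\<forall>i\<le>24. x i \<in> carrier G" using S(1) bij_betwE by fastforce
    then obtain i j where "i < j" "j \<le> 24" "x i = x j" using did1 unfolding did1_def by blast
    then show False using x by (auto simp: bij_betw_def dest: inj_onD)
  qed
next
  assume card: "finite (carrier G) \<and> card (carrier G) \<le> 24"
  show "did1 G" unfolding did1_def
  proof (intro allI impI)
    fix x :: "nat \<Rightarrow> _" assume "\<forall>i\<le>24. x i \<in> carrier G"
    then have "card (x ` {..24}) \<le> 24" using card card_mono[of "carrier G" "x ` {..24}"] by fastforce
    then have "\<not> inj_on x {..24}" by (auto dest: card_image)
    then show "\<exists>i j. i < j \<and> j \<le> 24 \<and> x i = x j"
      unfolding inj_on_def by (metis atMost_iff linorder_neqE_nat)
  qed
qed

lemma ex_not_mem_if_card_less: "finite B \<Longrightarrow> card B < card A \<Longrightarrow> \<exists>x\<in>A. x \<notin> B"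
  by (meson card_mono not_le subsetI)

lemma card_le_3: "card {a, b, c} \<le> 3"
  by (simp add: card_insert_if)

lemma card_Un_images_le:
  assumes "finite B" "finite S"
  shows "card (B \<union> (\<Union>x\<in>S. f x ` B)) \<le> card B * Suc (card S)"
proof -
  have "card (\<Union>x\<in>S. f x ` B) \<le> (\<Sum>x\<in>S. card (f x ` B))" by (rule card_UN_le[OF assms(2)])
  also have "\<dots> \<le> (\<Sum>x\<in>S. card B)" using card_image_le[OF assms(1)] by (intro sum_mono)
  finally show ?thesis using card_Un_le[of B "\<Union>x\<in>S. f x ` B"] by (simp add: mult.commute)
qed

lemma nat_in_divisors_24:
  fixes n :: nat
  assumes "0 < n" "n \<le> 24" "\<not> 9 dvd n" "\<not> 16 dvd n" "\<And>p. prime p \<Longrightarrow> 5 \<le> p \<Longrightarrow> \<not> p dvd n"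
  shows "n \<in> {1, 2, 3, 4, 6, 8, 12, 24}"
proof -
  from assms(1,2) have "n = 1 \<or> n = 2 \<or> n = 3 \<or> n = 4 \<or> n = 5 \<or> n = 6 \<or> n = 7 \<or> n = 8 \<or> n = 9
    \<or> n = 10 \<or> n = 11 \<or> n = 12 \<or> n = 13 \<or> n = 14 \<or> n = 15 \<or> n = 16 \<or> n = 17 \<or> n = 18
    \<or> n = 19 \<or> n = 20 \<or> n = 21 \<or> n = 22 \<or> n = 23 \<or> n = 24"
    by presburger
  moreover have "\<not> 5 dvd n" "\<not> 7 dvd n" "\<not> 11 dvd n" "\<not> 13 dvd n" "\<not> 17 dvd n" "\<not> 19 dvd n"
    "\<not> 23 dvd n"
    using assms(5) by simp_all
  ultimately show ?thesis using assms(3,4) by (elim disjE) simp_all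
qed

section \<open>The identities hold in $S_4$\<close>

definition perm_of_list :: "nat list \<Rightarrow> nat \<Rightarrow> nat" where
  "perm_of_list l i = (if i \<in> {1..4} then l ! (i - 1) else i)"

definition list_id :: "nat list" where
  "list_id = [1, 2, 3, 4]"

definition list_comp :: "nat list \<Rightarrow> nat list \<Rightarrow> nat list" where
  "list_comp l m = map (\<lambda>j. l ! (j - 1)) m"

fun list_pow :: "nat list \<Rightarrow> nat \<Rightarrow> nat list" where
  "list_pow l 0 = list_id"
| "list_pow l (Suc n) = list_comp (list_pow l n) l"

definition list_inv :: "nat list \<Rightarrow> nat list" where
  "list_inv l = map (\<lambda>i. Suc (length (takeWhile (\<lambda>x. x \<noteq> i) l))) [1, 2, 3, 4]"

definition S4_lists :: "nat list list" where
  "S4_lists =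
    [[1,2,3,4], [1,2,4,3], [1,3,2,4], [1,3,4,2], [1,4,2,3], [1,4,3,2],
     [2,1,3,4], [2,1,4,3], [2,3,1,4], [2,3,4,1], [2,4,1,3], [2,4,3,1],
     [3,1,2,4], [3,1,4,2], [3,2,1,4], [3,2,4,1], [3,4,1,2], [3,4,2,1],
     [4,1,2,3], [4,1,3,2], [4,2,1,3], [4,2,3,1], [4,3,1,2], [4,3,2,1]]"

lemma S4_lists_closed:
  "list_id \<in> set S4_lists"
  "\<forall>l\<in>set S4_lists. \<forall>m\<in>set S4_lists. list_comp l m \<in> set S4_lists"
  "\<forall>l\<in>set S4_lists. list_inv l \<in> set S4_lists \<and> list_comp (list_inv l) l = list_id"
  by code_simp+

lemma S4_lists_perm: "l \<in> set S4_lists \<Longrightarrow> length l = 4 \<and> distinct l \<and> set l = {1..4}"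
proof -
  have "\<forall>l\<in>set S4_lists. length l = 4 \<and> distinct l \<and> set l = set [1..<5]"
    by code_simp
  moreover have "set [1..<5] = {1..4::nat}" by auto
  ultimately show "l \<in> set S4_lists \<Longrightarrow> length l = 4 \<and> distinct l \<and> set l = {1..4}"
    by metis
qed

lemma list_pow_closed: "l \<in> set S4_lists \<Longrightarrow> list_pow l n \<in> set S4_lists"
  by (induction n) (simp_all add: S4_lists_closed)

lemma perm_of_list_permutes:
  assumes "l \<in> set S4_lists"
  shows "perm_of_list l permutes {1..4}"
proof -
  have l: "distinct l" "length l = 4" "set l = {1..4}" using S4_lists_perm[OF assms] by auto
  have "bij_betw ((!) l) {..<4} {1..4}" using bij_betw_nth[OF l(1)] l(2,3) by simp
  moreover have "bij_betw (\<lambda>i. i - 1) {1..4::nat} {..<4}"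
    by (rule bij_betw_byWitness[where f'="\<lambda>i. i + 1"]) auto
  ultimately have "bij_betw ((!) l \<circ> (\<lambda>i. i - 1)) {1..4} {1..4}"
    using bij_betw_trans by blast
  then have "bij_betw (perm_of_list l) {1..4} {1..4}"
    by (rule bij_betw_cong[THEN iffD1, rotated]) (simp add: perm_of_list_def)
  then show ?thesis by (rule bij_imp_permutes) (auto simp: perm_of_list_def)
qed

lemma perm_of_list_outside: "i \<notin> {1..4} \<Longrightarrow> perm_of_list l i = i"
  by (simp add: perm_of_list_def del: atLeastAtMost_iff)

lemma perm_of_list_inj: "inj_on perm_of_list (set S4_lists)"
proof (rule inj_onI)
  fix l m assume lm: "l \<in> set S4_lists" "m \<in> set S4_lists" "perm_of_list l = perm_of_list m"
  have "l ! i = m ! i" if "i < 4" for i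
    using fun_cong[OF lm(3), of "Suc i"] that by (simp add: perm_of_list_def)
  then show "l = m" using S4_lists_perm lm(1,2) by (metis nth_equalityI)
qed

lemma carrier_sym_group_4: "carrier (sym_group 4) = perm_of_list ` set S4_lists"
proof -
  have sub: "perm_of_list ` set S4_lists \<subseteq> carrier (sym_group 4)"
    using perm_of_list_permutes by (auto simp: sym_group_carrier)
  have "card (perm_of_list ` set S4_lists) = 24"
    using perm_of_list_inj by (simp add: card_image S4_lists_def)
  moreover have "card (carrier (sym_group 4)) = 24"
    by (simp add: sym_group_card_carrier fact_numeral)
  ultimately show ?thesis
    using card_subset_eq[OF _ sub] by (metis card.infinite zero_neq_numeral)
qed

lemma perm_of_list_id: "perm_of_list list_id = \<one>\<^bsub>sym_group 4\<^esub>"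
proof -
  have "perm_of_list list_id i = i" for i
  proof (cases "i \<in> {1..4}")
    case True
    then have "i = 1 \<or> i = 2 \<or> i = 3 \<or> i = 4" by auto
    then show ?thesis by (auto simp: perm_of_list_def list_id_def)
  qed (rule perm_of_list_outside)
  then show ?thesis by (auto simp: sym_group_one)
qed

lemma perm_of_list_comp:
  assumes "l \<in> set S4_lists" "m \<in> set S4_lists"
  shows "perm_of_list l \<otimes>\<^bsub>sym_group 4\<^esub> perm_of_list m = perm_of_list (list_comp l m)"
proof -
  have "perm_of_list l (perm_of_list m i) = perm_of_list (list_comp l m) i" for i
  proof (cases "i \<in> {1..4}")
    case True
    then have "i - 1 < length m" "m ! (i - 1) \<in> {1..4}"
      using S4_lists_perm[OF assms(2)] nth_mem[of "i - 1" m] by auto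
    then show ?thesis using True by (simp add: perm_of_list_def list_comp_def)
  qed (simp add: perm_of_list_outside)
  then show ?thesis by (auto simp: sym_group_mult)
qed

lemma perm_of_list_pow:
  "l \<in> set S4_lists \<Longrightarrow> perm_of_list l [^]\<^bsub>sym_group 4\<^esub> (n::nat) = perm_of_list (list_pow l n)"
  by (induction n) (simp_all add: perm_of_list_id perm_of_list_comp list_pow_closed)

lemma perm_of_list_inv:
  assumes "l \<in> set S4_lists"
  shows "inv\<^bsub>sym_group 4\<^esub> (perm_of_list l) = perm_of_list (list_inv l)"
proof -
  have "list_inv l \<in> set S4_lists" "list_comp (list_inv l) l = list_id"
    using S4_lists_closed(3) assms by auto
  then show ?thesis
    using group.inv_equality[OF sym_group_is_group] assms
    by (metis carrier_sym_group_4 image_eqI perm_of_list_comp perm_of_list_id)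
qed

lemma perm_of_list_eq_iff:
  "l \<in> set S4_lists \<Longrightarrow> m \<in> set S4_lists \<Longrightarrow> perm_of_list l = perm_of_list m \<longleftrightarrow> l = m"
  using perm_of_list_inj by (auto dest: inj_onD)

lemmas perm_of_list_simps =
  perm_of_list_id[symmetric] perm_of_list_comp perm_of_list_pow perm_of_list_inv perm_of_list_eq_iff
  S4_lists_closed list_pow_closed

lemma S4_dbasis_sym_group_4: "S4_dbasis (sym_group 4)"
proof -
  have "card (carrier (sym_group 4)) = 24"
    by (simp add: sym_group_card_carrier fact_numeral)
  then have "did1 (sym_group 4)"
    by (simp add: did1_iff_card_le_24 card_ge_0_finite)
  moreover have "did2 (sym_group 4)"
    unfolding did2_def carrier_sym_group_4
    by (simp only: ball_simps perm_of_list_simps cong: ball_cong) code_simp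
  moreover have "did3 (sym_group 4)"
    unfolding did3_def carrier_sym_group_4
    by (simp only: ball_simps perm_of_list_simps cong: ball_cong) code_simp
  moreover have "did4 (sym_group 4)"
    unfolding did4_def carrier_sym_group_4
    by (simp only: ball_simps perm_of_list_simps cong: ball_cong) code_simp
  moreover have "did5 (sym_group 4)"
    unfolding did5_def theta_iff in_cyc_def carrier_sym_group_4
    by (simp only: ball_simps perm_of_list_simps cong: ball_cong) code_simp
  ultimately show ?thesis unfolding S4_dbasis_def by blast
qed

context group
begin

lemma nat_pow_mod_period:
  assumes "x \<in> carrier G" "x [^] k = \<one>"
  shows "x [^] (n::nat) = x [^] (n mod k)"
proof -
  have "x [^] (k * q + r) = x [^] r" for q r :: nat
    using assms by (simp add: nat_pow_mult[symmetric] nat_pow_pow[symmetric])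
  then show ?thesis by (metis mult_div_mod_eq)
qed

lemma nat_pow_gcd_eq_one:
  "x \<in> carrier G \<Longrightarrow> x [^] (m::nat) = \<one> \<Longrightarrow> x [^] (n::nat) = \<one> \<Longrightarrow> x [^] gcd m n = \<one>"
  by (simp add: pow_eq_id)

lemma nat_pow_two: "x \<in> carrier G \<Longrightarrow> x [^] (2::nat) = x \<otimes> x"
  by (simp add: numeral_2_eq_2)

lemma nat_pow_three: "x \<in> carrier G \<Longrightarrow> x [^] (3::nat) = x \<otimes> x \<otimes> x"
  by (simp add: numeral_3_eq_3)

lemma subgroup_nat_pow_card:
  assumes "subgroup H G" "x \<in> H"
  shows "x [^] card H = \<one>"
proof -
  interpret H: group "G\<lparr>carrier := H\<rparr>" by (rule subgroup_imp_group[OF assms(1)])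
  have "x [^]\<^bsub>G\<lparr>carrier := H\<rparr>\<^esub> order (G\<lparr>carrier := H\<rparr>) = \<one>"
    using H.pow_order_eq_1 assms(2) by simp
  then show ?thesis using nat_pow_consistent by (simp add: order_def)
qed

lemma inv_eq_if_mult_eq_one: "x \<in> carrier G \<Longrightarrow> y \<in> carrier G \<Longrightarrow> x \<otimes> y = \<one> \<Longrightarrow> inv x = y"
  using inv_comm inv_equality by blast

lemma involutions_commute:
  assumes "y \<in> carrier G" "z \<in> carrier G" "y \<otimes> y = \<one>" "z \<otimes> z = \<one>" "(y \<otimes> z) \<otimes> (y \<otimes> z) = \<one>"
  shows "y \<otimes> z = z \<otimes> y"
proof -
  have "inv y = y" "inv z = z" "inv (y \<otimes> z) = y \<otimes> z"
    using inv_unique'[of y y] inv_unique'[of z z] inv_unique'[of "y \<otimes> z" "y \<otimes> z"] assms by auto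
  then show ?thesis using inv_mult_group assms(1,2) by metis
qed

end

definition conjugate :: "('a, 'b) monoid_scheme \<Rightarrow> 'a \<Rightarrow> 'a \<Rightarrow> 'a" where
  "conjugate G g x = g \<otimes>\<^bsub>G\<^esub> x \<otimes>\<^bsub>G\<^esub> inv\<^bsub>G\<^esub> g"

context group
begin

lemma conjugate_closed [simp]: "g \<in> carrier G \<Longrightarrow> x \<in> carrier G \<Longrightarrow> conjugate G g x \<in> carrier G"
  by (simp add: conjugate_def)

lemma conjugate_one [simp]: "x \<in> carrier G \<Longrightarrow> conjugate G \<one> x = x"
  by (simp add: conjugate_def)

lemma conjugate_of_one [simp]: "g \<in> carrier G \<Longrightarrow> conjugate G g \<one> = \<one>"
  by (simp add: conjugate_def)

lemma conjugate_mult_left: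
  "g \<in> carrier G \<Longrightarrow> h \<in> carrier G \<Longrightarrow> x \<in> carrier G \<Longrightarrow>
    conjugate G (g \<otimes> h) x = conjugate G g (conjugate G h x)"
  by (simp add: conjugate_def inv_mult_group m_assoc)

lemma conjugate_mult:
  "g \<in> carrier G \<Longrightarrow> x \<in> carrier G \<Longrightarrow> y \<in> carrier G \<Longrightarrow>
    conjugate G g (x \<otimes> y) = conjugate G g x \<otimes> conjugate G g y"
  by (simp add: conjugate_def m_assoc) (simp add: m_assoc[symmetric])

lemma conjugate_inv:
  "g \<in> carrier G \<Longrightarrow> x \<in> carrier G \<Longrightarrow> conjugate G g (inv x) = inv (conjugate G g x)"
  by (simp add: conjugate_def inv_mult_group m_assoc)

lemma conjugate_inv_left:
  "g \<in> carrier G \<Longrightarrow> x \<in> carrier G \<Longrightarrow> conjugate G (inv g) (conjugate G g x) = x"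
  by (simp add: conjugate_def m_assoc) (simp add: m_assoc[symmetric])

lemma conjugate_eq_one_iff [simp]:
  "g \<in> carrier G \<Longrightarrow> x \<in> carrier G \<Longrightarrow> conjugate G g x = \<one> \<longleftrightarrow> x = \<one>"
  by (metis conjugate_inv_left conjugate_of_one inv_closed)

lemma conjugate_nat_pow:
  "g \<in> carrier G \<Longrightarrow> x \<in> carrier G \<Longrightarrow> conjugate G g (x [^] (n::nat)) = conjugate G g x [^] n"
  by (induction n) (simp_all add: conjugate_mult)

lemma conjugate_eq_iff_commute:
  assumes "g \<in> carrier G" "x \<in> carrier G"
  shows "conjugate G g x = x \<longleftrightarrow> g \<otimes> x = x \<otimes> g"
proof -
  have "conjugate G g x = x \<longleftrightarrow> conjugate G g x \<otimes> g = x \<otimes> g" using assms by simp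
  moreover have "conjugate G g x \<otimes> g = g \<otimes> x" using assms by (simp add: conjugate_def m_assoc)
  ultimately show ?thesis by simp
qed

end

text \<open>For $a$ of order 3 this is the normaliser of $\langle a \rangle = \{1, a, a^{-1}\}$.\<close>

definition inv_normalizer :: "('a, 'b) monoid_scheme \<Rightarrow> 'a \<Rightarrow> 'a set" where
  "inv_normalizer G a = {g \<in> carrier G. conjugate G g a = a \<or> conjugate G g a = inv\<^bsub>G\<^esub> a}"

context group
begin

lemma subgroup_inv_normalizer:
  assumes "a \<in> carrier G"
  shows "subgroup (inv_normalizer G a) G"
proof (rule subgroupI)
  show "inv_normalizer G a \<subseteq> carrier G" "inv_normalizer G a \<noteq> {}"
    using assms by (auto simp: inv_normalizer_def intro!: exI[of _ \<one>])
next
  fix g assume "g \<in> inv_normalizer G a"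
  then have g: "g \<in> carrier G" "conjugate G g a = a \<or> conjugate G g a = inv a"
    by (simp_all add: inv_normalizer_def)
  have "conjugate G (inv g) (conjugate G g a) = a" using g(1) assms by (rule conjugate_inv_left)
  then have "conjugate G (inv g) a = a \<or> conjugate G (inv g) a = inv a"
    using g assms conjugate_inv by (metis inv_closed inv_inv)
  then show "inv g \<in> inv_normalizer G a" using g(1) by (simp add: inv_normalizer_def)
next
  fix g h assume "g \<in> inv_normalizer G a" "h \<in> inv_normalizer G a"
  then have g: "g \<in> carrier G" "conjugate G g a = a \<or> conjugate G g a = inv a"
    and h: "h \<in> carrier G" "conjugate G h a = a \<or> conjugate G h a = inv a"
    by (simp_all add: inv_normalizer_def)
  then have "conjugate G (g \<otimes> h) a = a \<or> conjugate G (g \<otimes> h) a = inv a"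
    using assms by (auto simp: conjugate_mult_left conjugate_inv)
  then show "g \<otimes> h \<in> inv_normalizer G a" using g h by (simp add: inv_normalizer_def)
qed

lemma cyclic_subgroup_subset_inv_normalizer:
  "a \<in> carrier G \<Longrightarrow> {\<one>, a, inv a} \<subseteq> inv_normalizer G a"
  by (auto simp: inv_normalizer_def conjugate_def m_assoc)

end

definition transport_perm :: "('a \<Rightarrow> nat) \<Rightarrow> 'a set \<Rightarrow> ('a \<Rightarrow> 'a) \<Rightarrow> nat \<Rightarrow> nat" where
  "transport_perm \<beta> E f i = (if i \<in> \<beta> ` E then \<beta> (f (inv_into E \<beta> i)) else i)"

lemma transport_perm_permutes:
  assumes "inj_on \<beta> E" "bij_betw f E E"
  shows "transport_perm \<beta> E f permutes \<beta> ` E"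
proof -
  have "bij_betw \<beta> E (\<beta> ` E)" using assms(1) by (rule inj_on_imp_bij_betw)
  then have "bij_betw (\<beta> \<circ> f \<circ> inv_into E \<beta>) (\<beta> ` E) (\<beta> ` E)"
    using assms(2) bij_betw_inv_into by (blast intro: bij_betw_trans)
  then have "bij_betw (transport_perm \<beta> E f) (\<beta> ` E) (\<beta> ` E)"
    by (rule bij_betw_cong[THEN iffD1, rotated]) (simp add: transport_perm_def)
  then show ?thesis by (rule bij_imp_permutes) (simp add: transport_perm_def)
qed

lemma transport_perm_compose:
  assumes "inj_on \<beta> E" "g ` E \<subseteq> E"
  shows "transport_perm \<beta> E (compose E f g) = transport_perm \<beta> E f \<circ> transport_perm \<beta> E g"
proof
  fix i
  show "transport_perm \<beta> E (compose E f g) i = (transport_perm \<beta> E f \<circ> transport_perm \<beta> E g) i"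
  proof (cases "i \<in> \<beta> ` E")
    case True
    then obtain x where x: "x \<in> E" "i = \<beta> x" by blast
    then have "g x \<in> E" using assms(2) by blast
    then show ?thesis using x assms(1) by (simp add: transport_perm_def compose_def)
  qed (simp add: transport_perm_def)
qed

lemma transport_perm_inj:
  assumes "inj_on \<beta> E" "f \<in> extensional E" "g \<in> extensional E" "f ` E \<subseteq> E" "g ` E \<subseteq> E"
    and "transport_perm \<beta> E f = transport_perm \<beta> E g"
  shows "f = g"
proof (rule extensionalityI[OF assms(2,3)])
  fix x assume x: "x \<in> E"
  have "\<beta> (f x) = \<beta> (g x)"
    using fun_cong[OF assms(6), of "\<beta> x"] x assms(1) by (simp add: transport_perm_def)
  then show "f x = g x" using assms(1,4,5) x by (meson image_subset_iff inj_onD)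
qed

lemma (in group_action) inj_hom_sym_group:
  assumes "finite E" "card E \<le> n" "inj_on \<phi> (carrier G)"
  shows "\<exists>h. h \<in> hom G (sym_group n) \<and> inj_on h (carrier G)"
proof -
  obtain \<beta> where "bij_betw \<beta> E {1..card E}"
    using finite_same_card_bij[OF assms(1), of "{1..card E}"] by auto
  then have \<beta>: "inj_on \<beta> E" "\<beta> ` E \<subseteq> {1..n}" using assms(2) by (auto simp: bij_betw_def)
  have Bij: "\<phi> g \<in> extensional E" "bij_betw (\<phi> g) E E" "\<phi> g ` E \<subseteq> E" if "g \<in> carrier G" for g
    using bij_prop0[OF that] by (auto simp: Bij_def bij_betw_def)
  define h where "h g = transport_perm \<beta> E (\<phi> g)" for g
  have "h g permutes {1..n}" if "g \<in> carrier G" for g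
    using transport_perm_permutes[OF \<beta>(1) Bij(2)[OF that]] \<beta>(2) unfolding h_def by (rule permutes_subset)
  moreover have "h (g1 \<otimes> g2) = h g1 \<circ> h g2" if "g1 \<in> carrier G" "g2 \<in> carrier G" for g1 g2
  proof -
    have "\<phi> (g1 \<otimes> g2) = compose E (\<phi> g1) (\<phi> g2)"
      using group_hom.hom_mult[OF group_hom that] bij_prop0 that by (simp add: BijGroup_def)
    then show ?thesis using transport_perm_compose[OF \<beta>(1) Bij(3)[OF that(2)]] unfolding h_def by simp
  qed
  moreover have "inj_on h (carrier G)"
    using transport_perm_inj[OF \<beta>(1) Bij(1) Bij(1) Bij(3) Bij(3)] inj_onD[OF assms(3)]
    unfolding h_def by (intro inj_onI) blast
  ultimately show ?thesis by (intro exI[of _ h]) (auto simp: hom_def sym_group_carrier sym_group_mult)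
qed

context group
begin

lemma rcosets_mult_Bij:
  assumes "subgroup H G" "g \<in> carrier G"
  shows "(\<lambda>R \<in> rcosets H. R #> g) \<in> Bij (rcosets H)"
proof -
  have sub: "R \<subseteq> carrier G" if "R \<in> rcosets H" for R
    using subgroup.rcosets_carrier[OF assms(1) is_group that] .
  have closed: "R #> x \<in> rcosets H" if "R \<in> rcosets H" "x \<in> carrier G" for R x
    using that subgroup.subset[OF assms(1)] by (auto simp: RCOSETS_def coset_mult_assoc intro!: rcosetsI)
  have "bij_betw (\<lambda>R. R #> g) (rcosets H) (rcosets H)"
  proof (rule bij_betw_byWitness[where f'="\<lambda>R. R #> inv g"])
    show "\<forall>R\<in>rcosets H. R #> g #> inv g = R" "\<forall>R\<in>rcosets H. R #> inv g #> g = R"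
      using assms(2) sub by (simp_all add: coset_mult_assoc)
    show "(\<lambda>R. R #> g) ` (rcosets H) \<subseteq> rcosets H" "(\<lambda>R. R #> inv g) ` (rcosets H) \<subseteq> rcosets H"
      using assms(2) closed by auto
  qed
  then have "bij_betw (\<lambda>R \<in> rcosets H. R #> g) (rcosets H) (rcosets H)"
    by (rule bij_betw_cong[THEN iffD1, rotated]) simp
  then show ?thesis by (simp add: Bij_def)
qed

lemma rcosets_action:
  assumes "subgroup H G"
  shows "group_action G (rcosets H) (\<lambda>g. \<lambda>R \<in> rcosets H. R #> inv g)"
proof -
  have "(\<lambda>g. \<lambda>R \<in> rcosets H. R #> inv g) \<in> hom G (BijGroup (rcosets H))"
  proof (rule homI)
    fix g assume "g \<in> carrier G"
    then show "(\<lambda>R \<in> rcosets H. R #> inv g) \<in> carrier (BijGroup (rcosets H))"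
      using rcosets_mult_Bij[OF assms] by (simp add: BijGroup_def)
  next
    fix g h assume gh: "g \<in> carrier G" "h \<in> carrier G"
    have "(\<lambda>R \<in> rcosets H. R #> inv (g \<otimes> h))
        = compose (rcosets H) (\<lambda>R \<in> rcosets H. R #> inv g) (\<lambda>R \<in> rcosets H. R #> inv h)"
      unfolding compose_def
    proof (rule restrict_ext)
      fix R assume R: "R \<in> rcosets H"
      then have "R #> inv h \<in> rcosets H"
        using rcosets_mult_Bij[OF assms inv_closed[OF gh(2)]] by (auto simp: Bij_def bij_betw_def)
      then show "R #> inv (g \<otimes> h) = (\<lambda>R \<in> rcosets H. R #> inv g) ((\<lambda>R \<in> rcosets H. R #> inv h) R)"
        using R gh subgroup.rcosets_carrier[OF assms is_group R]
        by (simp add: inv_mult_group coset_mult_assoc)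
    qed
    then show "(\<lambda>R \<in> rcosets H. R #> inv (g \<otimes> h))
        = (\<lambda>R \<in> rcosets H. R #> inv g) \<otimes>\<^bsub>BijGroup (rcosets H)\<^esub> (\<lambda>R \<in> rcosets H. R #> inv h)"
      using gh rcosets_mult_Bij[OF assms] by (simp add: BijGroup_def)
  qed
  then show ?thesis
    by (simp add: group_action_def group_hom_def group_hom_axioms_def group_BijGroup)
qed

lemma rcosets_action_inj:
  assumes "subgroup H G"
    and core: "\<And>k. k \<in> H \<Longrightarrow> \<forall>g\<in>carrier G. conjugate G g k \<in> H \<Longrightarrow> k = \<one>"
  shows "inj_on (\<lambda>g. \<lambda>R \<in> rcosets H. R #> inv g) (carrier G)"
proof (rule inj_onI)
  fix g1 g2 assume g: "g1 \<in> carrier G" "g2 \<in> carrier G"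
    and eq: "(\<lambda>R \<in> rcosets H. R #> inv g1) = (\<lambda>R \<in> rcosets H. R #> inv g2)"
  have H: "H \<subseteq> carrier G" using assms(1) subgroup.subset by blast
  define k where "k = inv g1 \<otimes> g2"
  have conj: "conjugate G x k \<in> H" if x: "x \<in> carrier G" for x
  proof -
    have "H #> x #> inv g1 = H #> x #> inv g2"
      using fun_cong[OF eq, of "H #> x"] rcosetsI[OF H x] by simp
    then have "H #> (x \<otimes> inv g1) = H #> (x \<otimes> inv g2)" using H x g by (simp add: coset_mult_assoc)
    then have "x \<otimes> inv g1 \<in> H #> (x \<otimes> inv g2)"
      using rcos_self[OF _ assms(1)] x g by (metis inv_closed m_closed)
    then have "(x \<otimes> inv g1) \<otimes> inv (x \<otimes> inv g2) \<in> H"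
      using subgroup.rcos_module_imp[OF assms(1) is_group] x g by simp
    moreover have "(x \<otimes> inv g1) \<otimes> inv (x \<otimes> inv g2) = conjugate G x k"
      unfolding k_def conjugate_def using x g by (simp add: inv_mult_group m_assoc)
    ultimately show ?thesis by simp
  qed
  have "k \<in> H" using conj[of \<one>] g unfolding k_def by simp
  then have "k = \<one>" using core conj by blast
  moreover have "g2 = g1 \<otimes> k" using g by (simp add: k_def m_assoc[symmetric])
  ultimately show "g1 = g2" using g by simp
qed

lemma inj_hom_sym_group_4_if_index_le_4:
  assumes "finite (carrier G)" "subgroup H G" "order G \<le> 4 * card H"
    and "\<And>k. k \<in> H \<Longrightarrow> \<forall>g\<in>carrier G. conjugate G g k \<in> H \<Longrightarrow> k = \<one>"
  shows "\<exists>h. h \<in> hom G (sym_group 4) \<and> inj_on h (carrier G)"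
proof -
  have "card H > 0"
    using assms(1,2) by (metis card_gt_0_iff empty_iff finite_subset subgroup.one_closed subgroup.subset)
  then have "card (rcosets H) \<le> 4" using lagrange[OF assms(2)] assms(3) by (metis mult_le_cancel2)
  moreover have "finite (rcosets H)"
    using assms(1) by (simp add: RCOSETS_def r_coset_def)
  ultimately show ?thesis
    using group_action.inj_hom_sym_group[OF rcosets_action[OF assms(2)]]
      rcosets_action_inj[OF assms(2,4)]
    by blast
qed

lemma inj_hom_is_section_of:
  assumes "group K" "h \<in> hom G K" "inj_on h (carrier G)"
  shows "is_section_of G K"
proof -
  let ?H = "h ` carrier G"
  let ?K = "K\<lparr>carrier := ?H\<rparr>"
  interpret h: group_hom G K h using assms(1,2) by (simp add: group_hom_def group_hom_axioms_def)
  have H: "subgroup ?H K" by (rule h.img_is_subgroup)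
  interpret K': group ?K using group.subgroup_imp_group[OF assms(1) H] .
  have "G \<cong> ?K"
    using assms(2,3) by (auto intro!: is_isoI simp: iso_def hom_def bij_betw_def)
  also have "?K \<cong> ?K Mod {\<one>\<^bsub>?K\<^esub>}"
    using K'.trivial_factor_iso is_isoI group.iso_sym normal.factorgroup_is_group[OF K'.one_is_normal]
    by blast
  finally show ?thesis unfolding is_section_of_def using H K'.one_is_normal by blast
qed

lemma exists_subgroup_card_prime_power:
  assumes "finite (carrier G)" "prime p" "p ^ k dvd order G"
  shows "\<exists>H. subgroup H G \<and> card H = p ^ k"
  using sylow_thm[OF assms(2) is_group _ assms(1)] assms(3) by (metis dvd_mult_div_cancel)

lemma subgroup_elem_eq_one_if_coprime:
  assumes "subgroup H G" "x \<in> H" "x [^] k = \<one>" "coprime k (card H)"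
  shows "x = \<one>"
proof -
  have x: "x \<in> carrier G" using assms(1,2) subgroup.subset by blast
  then have "x [^] gcd k (card H) = \<one>"
    using nat_pow_gcd_eq_one assms(3) subgroup_nat_pow_card[OF assms(1,2)] by blast
  then show ?thesis using assms(4) x by simp
qed

lemma exists_elem_of_prime_order:
  assumes "finite (carrier G)" "prime p" "p dvd order G"
  shows "\<exists>x\<in>carrier G. x \<noteq> \<one> \<and> x [^] p = \<one>"
proof -
  obtain H where H: "subgroup H G" "card H = p"
    using exists_subgroup_card_prime_power[OF assms(1,2), of 1] assms(3) by auto
  then have "card {\<one>} < card H" using assms(2) prime_gt_1_nat by simp
  then obtain x where "x \<in> H" "x \<noteq> \<one>" using ex_not_mem_if_card_less by blast
  moreover have "x \<in> carrier G" using H(1) \<open>x \<in> H\<close> subgroup.subset by blast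
  ultimately show ?thesis using subgroup_nat_pow_card[OF H(1)] H(2) by blast
qed

lemma inv_of_pow3_eq_one: "a \<in> carrier G \<Longrightarrow> a [^] (3::nat) = \<one> \<Longrightarrow> inv a = a \<otimes> a"
  by (metis inv_unique' m_assoc m_closed nat_pow_three)

lemma card_cyclic_subgroup_order3:
  assumes "a \<in> carrier G" "a [^] (3::nat) = \<one>" "a \<noteq> \<one>"
  shows "card {\<one>, a, inv a} = 3"
proof -
  have "inv a \<noteq> a"
  proof
    assume "inv a = a"
    then have "a \<otimes> a = \<one>" using r_inv assms(1) by metis
    then have "a [^] (3::nat) = a" using assms(1) by (simp add: nat_pow_three)
    then show False using assms by simp
  qed
  moreover have "inv a \<noteq> \<one>" using assms(1,3) by simp
  ultimately show ?thesis using assms(3) by simp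
qed

lemma inj_hom_sym_group_4_if_noncentral_involution:
  assumes "finite (carrier G)" "order G \<le> 8"
    and b: "b \<in> carrier G" "b \<otimes> b = \<one>" "b \<noteq> \<one>"
    and g: "g \<in> carrier G" "g \<otimes> b \<noteq> b \<otimes> g"
  shows "\<exists>h. h \<in> hom G (sym_group 4) \<and> inj_on h (carrier G)"
proof (rule inj_hom_sym_group_4_if_index_le_4[OF assms(1)])
  have "inv b = b" using inv_eq_if_mult_eq_one b by simp
  then show "subgroup {\<one>, b} G" using b by (auto intro!: subgroupI)
  show "order G \<le> 4 * card {\<one>, b}" using assms(2) b(3) by simp
  fix k assume k: "k \<in> {\<one>, b}" "\<forall>g\<in>carrier G. conjugate G g k \<in> {\<one>, b}"
  show "k = \<one>"
  proof (rule ccontr)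
    assume "k \<noteq> \<one>"
    then have "conjugate G g b = b" using k b g(1) by auto
    then show False using conjugate_eq_iff_commute b(1) g by blast
  qed
qed

end

section \<open>Groups satisfying the identities\<close>

locale S4_dbasis_group = group G for G (structure) +
  assumes S4_dbasis: "S4_dbasis G"
begin

lemma finite_carrier: "finite (carrier G)"
  and order_le_24: "order G \<le> 24"
  using S4_dbasis by (simp_all add: S4_dbasis_def did1_iff_card_le_24 order_def)

lemma did2D:
  "x \<in> carrier G \<Longrightarrow> y \<in> carrier G \<Longrightarrow> x [^] (4::nat) = \<one> \<or> y [^] (4::nat) = \<one>
    \<or> (x \<otimes> y) [^] (4::nat) = \<one> \<or> (x \<otimes> y [^] (2::nat)) [^] (4::nat) = \<one>"
  using S4_dbasis unfolding S4_dbasis_def did2_def by blast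

lemma did3D: "x \<in> carrier G \<Longrightarrow> x [^] (3::nat) = \<one> \<or> x [^] (4::nat) = \<one>"
  using S4_dbasis unfolding S4_dbasis_def did3_def by blast

lemma did4D:
  "x \<in> carrier G \<Longrightarrow> y \<in> carrier G \<Longrightarrow> x [^] (6::nat) = \<one> \<or> y [^] (6::nat) = \<one>
    \<or> x = y \<or> x \<otimes> y = \<one> \<or> (x \<otimes> y) [^] (3::nat) = \<one>"
  using S4_dbasis unfolding S4_dbasis_def did4_def by blast

lemma did5D:
  "x1 \<in> carrier G \<Longrightarrow> x2 \<in> carrier G \<Longrightarrow> x3 \<in> carrier G \<Longrightarrow>
      x1 [^] (3::nat) = \<one> \<or> x2 [^] (3::nat) = \<one> \<or> x3 [^] (3::nat) = \<one>
    \<or> (inv x1 \<otimes> x2) [^] (3::nat) = \<one> \<or> (inv x1 \<otimes> x3) [^] (3::nat) = \<one>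
    \<or> (inv x2 \<otimes> x3) [^] (3::nat) = \<one> \<or> theta G x1 x2 x3"
  using S4_dbasis unfolding S4_dbasis_def did5_def by blast

lemma subgroup_pow4_if_coprime_3:
  "subgroup H G \<Longrightarrow> coprime 3 (card H) \<Longrightarrow> x \<in> H \<Longrightarrow> x [^] (4::nat) = \<one>"
  using did3D subgroup_elem_eq_one_if_coprime by (metis nat_pow_one subgroup.mem_carrier)

lemma subgroup_pow3_if_coprime_4:
  "subgroup H G \<Longrightarrow> coprime 4 (card H) \<Longrightarrow> x \<in> H \<Longrightarrow> x [^] (3::nat) = \<one>"
  using did3D subgroup_elem_eq_one_if_coprime by (metis nat_pow_one subgroup.mem_carrier)

lemma no_subgroup_of_large_prime_card:
  assumes "prime p" "5 \<le> p" "subgroup H G"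
  shows "card H \<noteq> p"
proof
  assume card: "card H = p"
  have "\<not> p dvd 3" "\<not> p dvd 4" using assms(2) by (auto dest: dvd_imp_le)
  then have "coprime 3 p" "coprime 4 p" using prime_imp_coprime[OF assms(1)] coprime_commute by blast+
  have "x = \<one>" if x: "x \<in> H" for x
  proof -
    have "x [^] (3::nat) = \<one>"
      using subgroup_pow3_if_coprime_4[OF assms(3) _ x] \<open>coprime 4 p\<close> card by simp
    then show ?thesis using subgroup_elem_eq_one_if_coprime[OF assms(3) x] \<open>coprime 3 p\<close> card by simp
  qed
  then have "H \<subseteq> {\<one>}" by blast
  then have "card H \<le> card {\<one>}" by (intro card_mono) auto
  then show False using card assms(2) by simp
qed

lemma commuting_pow4_of_order3:
  assumes a: "a \<in> carrier G" "a [^] (3::nat) = \<one>" "a \<noteq> \<one>"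
    and g: "g \<in> carrier G" "g [^] (4::nat) = \<one>" "g \<otimes> a = a \<otimes> g"
  shows "g = \<one>"
proof -
  have "(a \<otimes> g) [^] (4::nat) = a [^] (4::nat) \<otimes> g [^] (4::nat)"
    using pow_mult_distrib a g by simp
  also have "\<dots> = a" using nat_pow_mod_period[OF a(1,2), of 4] a g by simp
  finally have "(a \<otimes> g) [^] (3::nat) = \<one>" using did3D[of "a \<otimes> g"] a g by auto
  moreover have "(a \<otimes> g) [^] (3::nat) = g [^] (3::nat)" using pow_mult_distrib a g by simp
  ultimately have "g [^] (3::nat) = \<one>" by simp
  from nat_pow_gcd_eq_one[OF g(1) this g(2)] show ?thesis using g(1) by (simp add: gcd_non_0_nat)
qed

lemma centralizer_of_order3:
  assumes a: "a \<in> carrier G" "a [^] (3::nat) = \<one>" "a \<noteq> \<one>"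
    and g: "g \<in> carrier G" "g \<otimes> a = a \<otimes> g"
  shows "g \<in> {\<one>, a, inv a}"
proof (cases "g [^] (4::nat) = \<one>")
  case True
  then show ?thesis using commuting_pow4_of_order3 a g by blast
next
  case False
  then have g3: "g [^] (3::nat) = \<one>" using did3D g(1) by blast
  have pow4: "x [^] (4::nat) = x" if "x \<in> carrier G" "x [^] (3::nat) = \<one>" for x
    using nat_pow_mod_period[OF that, of 4] that by simp
  have ag: "a \<otimes> g = g \<otimes> a" "a \<otimes> g [^] (2::nat) = g [^] (2::nat) \<otimes> a"
    using g a by (simp_all add: nat_pow_two m_assoc) (metis m_assoc)
  have "(g [^] (2::nat)) [^] (3::nat) = \<one>"
    using g3 g(1) by (metis nat_pow_one nat_pow_pow mult.commute)
  then have "(a \<otimes> g) [^] (3::nat) = \<one>" "(a \<otimes> g [^] (2::nat)) [^] (3::nat) = \<one>"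
    using pow_mult_distrib[OF ag(1)] pow_mult_distrib[OF ag(2)] a g g3 by simp_all
  then have "(a \<otimes> g) [^] (4::nat) = a \<otimes> g" "(a \<otimes> g [^] (2::nat)) [^] (4::nat) = a \<otimes> g [^] (2::nat)"
    using pow4 a g by simp_all
  moreover have "a [^] (4::nat) \<noteq> \<one>" using pow4 a by simp
  ultimately consider "a \<otimes> g = \<one>" | "a \<otimes> g [^] (2::nat) = \<one>"
    using did2D[OF a(1) g(1)] False by auto
  then show ?thesis
  proof cases
    case 1
    then show ?thesis using inv_eq_if_mult_eq_one a g by blast
  next
    case 2
    then have "g [^] (2::nat) = inv a" using inv_eq_if_mult_eq_one[of a "g [^] (2::nat)"] a g by simp
    then have "g [^] (4::nat) = inv a \<otimes> inv a" using nat_pow_mult[OF g(1), of 2 2] by simp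
    also have "\<dots> = a" using inv_of_pow3_eq_one a pow4 by (simp add: m_assoc nat_pow_three)
    finally show ?thesis using pow4 g g3 by simp
  qed
qed

lemma commuting_involutions_dependent:
  assumes x: "x1 \<in> carrier G" "x2 \<in> carrier G" "x3 \<in> carrier G"
    and invol: "x1 \<otimes> x1 = \<one>" "x2 \<otimes> x2 = \<one>" "x3 \<otimes> x3 = \<one>"
    and nontriv: "x1 \<noteq> \<one>" "x2 \<noteq> \<one>" "x3 \<noteq> \<one>"
    and comm: "x2 \<otimes> x1 = x1 \<otimes> x2" "x3 \<otimes> x1 = x1 \<otimes> x3" "x3 \<otimes> x2 = x2 \<otimes> x3"
    and distinct: "x1 \<noteq> x2" "x3 \<noteq> x1" "x3 \<noteq> x2"
  shows "x3 = x1 \<otimes> x2"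
proof (rule ccontr)
  assume x3: "x3 \<noteq> x1 \<otimes> x2"
  have square: "(x \<otimes> y) \<otimes> (x \<otimes> y) = \<one>"
    if "x \<in> carrier G" "y \<in> carrier G" "x \<otimes> x = \<one>" "y \<otimes> y = \<one>" "y \<otimes> x = x \<otimes> y" for x y
  proof -
    have "(x \<otimes> y) \<otimes> (x \<otimes> y) = x \<otimes> ((y \<otimes> x) \<otimes> y)" using that(1,2) by (simp add: m_assoc)
    also have "\<dots> = (x \<otimes> x) \<otimes> (y \<otimes> y)" using that by (simp add: m_assoc)
    finally show ?thesis using that by simp
  qed
  note sq = square[OF x(1,2) invol(1,2) comm(1)] square[OF x(1,3) invol(1,3) comm(2)]
    square[OF x(2,3) invol(2,3) comm(3)]
  have inv_x: "inv x1 = x1" "inv x2 = x2" using inv_eq_if_mult_eq_one x invol by simp_all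
  have cube: "v [^] (3::nat) = v" if "v \<in> carrier G" "v \<otimes> v = \<one>" for v
    using that by (simp add: nat_pow_three)
  have in_cyc_invol: "in_cyc G u v \<longleftrightarrow> u = \<one> \<or> u = v" if "v \<in> carrier G" "v \<otimes> v = \<one>" for u v
    unfolding in_cyc_def using that by (auto simp: nat_pow_two nat_pow_three)
  have ne_one: "x1 \<otimes> x2 \<noteq> \<one>" "x1 \<otimes> x3 \<noteq> \<one>" "x2 \<otimes> x3 \<noteq> \<one>"
    using inv_eq_if_mult_eq_one[of x1 x2] inv_eq_if_mult_eq_one[of x1 x3] inv_eq_if_mult_eq_one[of x2 x3]
      x inv_x distinct by auto
  have ne: "x1 \<noteq> x2 \<otimes> x3" "x2 \<noteq> x1 \<otimes> x3"
    "x1 \<otimes> x2 \<noteq> x2 \<otimes> x3" "x1 \<otimes> x2 \<noteq> x1 \<otimes> x3" "x1 \<otimes> x3 \<noteq> x2 \<otimes> x3"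
    using x invol comm distinct x3 by (auto simp: m_assoc[symmetric])
  have "\<not> theta G x1 x2 x3"
    unfolding theta_iff using x sq invol nontriv ne_one ne distinct x3 comm
    by (simp add: in_cyc_invol)
  moreover have "(inv x1 \<otimes> x2) [^] (3::nat) = x1 \<otimes> x2" "(inv x1 \<otimes> x3) [^] (3::nat) = x1 \<otimes> x3"
    "(inv x2 \<otimes> x3) [^] (3::nat) = x2 \<otimes> x3"
    using inv_x cube sq x by simp_all
  moreover have "x1 [^] (3::nat) = x1" "x2 [^] (3::nat) = x2" "x3 [^] (3::nat) = x3"
    using cube x invol by auto
  ultimately show False using did5D[OF x] nontriv ne_one by auto
qed

lemma card_commuting_involutions_le_3:
  assumes "S \<subseteq> carrier G"
    and "\<And>x. x \<in> S \<Longrightarrow> x \<otimes> x = \<one> \<and> x \<noteq> \<one>"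
    and "\<And>x y. x \<in> S \<Longrightarrow> y \<in> S \<Longrightarrow> x \<otimes> y = y \<otimes> x"
  shows "card S \<le> 3"
proof (rule ccontr)
  assume "\<not> card S \<le> 3"
  then have "card {} < card S" "card {x1} < card S" "card {x1, x2, x1 \<otimes> x2} < card S" for x1 x2
    using card_le_3[of x1 x2 "x1 \<otimes> x2"] by auto
  then have "\<exists>x1\<in>S. x1 \<notin> {}" "\<exists>x2\<in>S. x2 \<notin> {x1}" "\<exists>x3\<in>S. x3 \<notin> {x1, x2, x1 \<otimes> x2}" for x1 x2
    by (intro ex_not_mem_if_card_less; simp)+
  then obtain x1 x2 x3 where x: "x1 \<in> S" "x2 \<in> S" "x2 \<noteq> x1" "x3 \<in> S" "x3 \<notin> {x1, x2, x1 \<otimes> x2}"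
    by blast
  have "x1 \<in> carrier G" "x2 \<in> carrier G" "x3 \<in> carrier G" using assms(1) x by auto
  moreover have "x1 \<otimes> x1 = \<one>" "x2 \<otimes> x2 = \<one>" "x3 \<otimes> x3 = \<one>" "x1 \<noteq> \<one>" "x2 \<noteq> \<one>" "x3 \<noteq> \<one>"
    using assms(2) x by auto
  moreover have "x2 \<otimes> x1 = x1 \<otimes> x2" "x3 \<otimes> x1 = x1 \<otimes> x3" "x3 \<otimes> x2 = x2 \<otimes> x3"
    using assms(3) x by blast+
  ultimately have "x3 = x1 \<otimes> x2" by (rule commuting_involutions_dependent) (use x in auto)
  then show False using x by simp
qed

lemma order4_elems_eq_or_inv:
  assumes H: "subgroup H G" "\<forall>x\<in>H. x [^] (4::nat) = \<one>"
    and c: "c \<in> H" "c \<otimes> c \<noteq> \<one>" and d: "d \<in> H" "d \<otimes> d \<noteq> \<one>"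
  shows "d = c \<or> d = inv c"
proof -
  have cd: "c \<in> carrier G" "d \<in> carrier G"
    using subgroup.mem_carrier[OF H(1) c(1)] subgroup.mem_carrier[OF H(1) d(1)] .
  have pow6: "x [^] (6::nat) \<noteq> \<one>" if "x \<in> H" "x \<otimes> x \<noteq> \<one>" for x
  proof -
    have "x \<in> carrier G" using subgroup.mem_carrier[OF H(1) that(1)] .
    then have "x [^] (6::nat) = x \<otimes> x"
      using nat_pow_mod_period[of x 4 6] H(2) that(1) by (simp add: nat_pow_two)
    then show ?thesis using that(2) by simp
  qed
  have "c [^] (6::nat) \<noteq> \<one>" "d [^] (6::nat) \<noteq> \<one>" using pow6 c d by auto
  then have "c = d \<or> c \<otimes> d = \<one> \<or> (c \<otimes> d) [^] (3::nat) = \<one>" using did4D[OF cd] by simp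
  moreover have "c \<otimes> d = \<one>" if "(c \<otimes> d) [^] (3::nat) = \<one>"
  proof -
    have "(c \<otimes> d) [^] (4::nat) = \<one>" using H(2) subgroup.m_closed[OF H(1) c(1) d(1)] by simp
    from nat_pow_gcd_eq_one[OF _ that this] show ?thesis using cd by (simp add: gcd_non_0_nat)
  qed
  ultimately show ?thesis using inv_eq_if_mult_eq_one[OF cd] by auto
qed

lemma card_order4_elems_le_2:
  assumes "subgroup H G" "\<forall>x\<in>H. x [^] (4::nat) = \<one>"
  shows "card {x \<in> H. x \<otimes> x \<noteq> \<one>} \<le> 2"
proof (cases "{x \<in> H. x \<otimes> x \<noteq> \<one>} = {}")
  case False
  then obtain c where "c \<in> H" "c \<otimes> c \<noteq> \<one>" by blast
  then have "{x \<in> H. x \<otimes> x \<noteq> \<one>} \<subseteq> {c, inv c}" using order4_elems_eq_or_inv assms by blast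
  then have "card {x \<in> H. x \<otimes> x \<noteq> \<one>} \<le> card {c, inv c}" by (intro card_mono) auto
  also have "\<dots> \<le> 2" by (simp add: card_insert_if)
  finally show ?thesis .
qed (metis card.empty zero_le)

lemma exists_involution_commuting_with:
  assumes H: "subgroup H G" "finite H" "\<forall>x\<in>H. x [^] (4::nat) = \<one>"
    and S: "S \<subseteq> H" "\<forall>x\<in>S. x \<otimes> x = \<one>" and card: "3 * Suc (card S) < card H"
  shows "\<exists>y\<in>H - S. y \<otimes> y = \<one> \<and> y \<noteq> \<one> \<and> (\<forall>x\<in>S. x \<otimes> y = y \<otimes> x)"
proof -
  txt \<open>Choose $y$ outside $B$ and outside $x B$ for all $x \in S$: then $y$ and all $x y$ are
    involutions, so $y$ commutes with $S$.\<close>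
  define B where "B = insert \<one> {x \<in> H. x \<otimes> x \<noteq> \<one>}"
  define U where "U = B \<union> (\<Union>x\<in>S. (\<lambda>z. x \<otimes> z) ` B)"
  have fin: "finite B" "finite S" using H(2) S(1) finite_subset unfolding B_def by auto
  have "card B \<le> 3"
    unfolding B_def using card_order4_elems_le_2[OF H(1,3)] by (intro card_insert_le_m1) simp_all
  then have "card U < card H"
    using card_Un_images_le[OF fin, of "\<lambda>x z. x \<otimes> z"] mult_le_mono1[of "card B" 3 "Suc (card S)"] card
    unfolding U_def by linarith
  moreover have "finite U" using fin unfolding U_def by blast
  ultimately obtain y where y: "y \<in> H" "y \<notin> U" using ex_not_mem_if_card_less by blast
  have yc: "y \<in> carrier G" using subgroup.mem_carrier[OF H(1) y(1)] .
  have y_invol: "y \<otimes> y = \<one> \<and> y \<noteq> \<one>" using y unfolding U_def B_def by auto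
  have "y \<notin> S"
  proof
    assume "y \<in> S"
    then have "y \<otimes> \<one> \<in> U" unfolding U_def B_def by blast
    then show False using y yc by simp
  qed
  moreover have "x \<otimes> y = y \<otimes> x" if x: "x \<in> S" for x
  proof -
    have xc: "x \<in> carrier G" using subgroup.mem_carrier[OF H(1)] x S(1) by blast
    have "x \<otimes> y \<notin> B"
    proof
      assume "x \<otimes> y \<in> B"
      then have "x \<otimes> (x \<otimes> y) \<in> U" using x unfolding U_def by blast
      then show False using y S(2) x xc yc by (simp add: m_assoc[symmetric])
    qed
    then have "(x \<otimes> y) \<otimes> (x \<otimes> y) = \<one>"
      using subgroup.m_closed[OF H(1)] x y S(1) unfolding B_def by blast
    then show ?thesis using involutions_commute xc yc S(2) x y_invol by blast
  qed
  ultimately show ?thesis using y(1) y_invol by blast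
qed

lemma commuting_involutions_in_exponent4:
  assumes H: "subgroup H G" "finite H" "\<forall>x\<in>H. x [^] (4::nat) = \<one>" and n: "3 * n < card H"
  shows "\<exists>S \<subseteq> H. card S = n \<and> (\<forall>x\<in>S. x \<otimes> x = \<one> \<and> x \<noteq> \<one>) \<and> (\<forall>x\<in>S. \<forall>y\<in>S. x \<otimes> y = y \<otimes> x)"
  using n
proof (induction n)
  case 0
  then show ?case by auto
next
  case (Suc n)
  then obtain S where S: "S \<subseteq> H" "card S = n" "\<forall>x\<in>S. x \<otimes> x = \<one> \<and> x \<noteq> \<one>"
    "\<forall>x\<in>S. \<forall>y\<in>S. x \<otimes> y = y \<otimes> x"
    by auto
  moreover obtain y where "y \<in> H - S" "y \<otimes> y = \<one> \<and> y \<noteq> \<one>" "\<forall>x\<in>S. x \<otimes> y = y \<otimes> x"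
    using exists_involution_commuting_with[OF H S(1)] S(2,3) Suc.prems by auto
  moreover have "finite S" using S(1) H(2) finite_subset by blast
  ultimately show ?case by (intro exI[of _ "insert y S"]) auto
qed

lemma no_subgroup_of_card_16: "subgroup H G \<Longrightarrow> card H \<noteq> 16"
proof
  assume H: "subgroup H G" "card H = 16"
  then have "\<forall>x\<in>H. x [^] (4::nat) = \<one>"
    using subgroup_pow4_if_coprime_3 by (simp add: coprime_iff_gcd_eq_1 gcd_non_0_nat)
  then obtain S where "S \<subseteq> H" "card S = 4" "\<forall>x\<in>S. x \<otimes> x = \<one> \<and> x \<noteq> \<one>" "\<forall>x\<in>S. \<forall>y\<in>S. x \<otimes> y = y \<otimes> x"
    using commuting_involutions_in_exponent4[OF H(1), of 4] H(2) card.infinite by fastforce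
  then show False using card_commuting_involutions_le_3[of S] H(1) subgroup.subset by fastforce
qed

lemma card_subgroup_exponent3_le_3:
  assumes H: "subgroup H G" "\<forall>x\<in>H. x [^] (3::nat) = \<one>"
  shows "card H \<le> 3"
proof (rule ccontr)
  assume "\<not> card H \<le> 3"
  then have "card {\<one>} < card H" "card {\<one>, x1, x1 \<otimes> x1} < card H" for x1
    using card_le_3[of \<one> x1 "x1 \<otimes> x1"] by auto
  then have "\<exists>x1\<in>H. x1 \<notin> {\<one>}" "\<exists>x2\<in>H. x2 \<notin> {\<one>, x1, x1 \<otimes> x1}" for x1
    by (intro ex_not_mem_if_card_less; simp)+
  then obtain x1 x2 where x: "x1 \<in> H" "x1 \<noteq> \<one>" "x2 \<in> H" "x2 \<notin> {\<one>, x1, x1 \<otimes> x1}"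
    by blast
  have xc: "x1 \<in> carrier G" "x2 \<in> carrier G"
    using subgroup.mem_carrier[OF H(1) x(1)] subgroup.mem_carrier[OF H(1) x(3)] .
  have pow4: "x [^] (4::nat) = x" if "x \<in> H" for x
    using nat_pow_mod_period[OF subgroup.mem_carrier[OF H(1) that], of 3 4] subgroup.mem_carrier[OF H(1) that]
      H(2) that by simp
  have inv_x1: "inv x1 = x1 \<otimes> x1" using inv_of_pow3_eq_one xc H x by blast
  have "x1 \<otimes> x2 \<in> H" "x1 \<otimes> x2 [^] (2::nat) \<in> H"
    using x H(1) by (simp_all add: subgroup.m_closed nat_pow_two subgroup.mem_carrier)
  then have "x1 \<otimes> x2 = \<one> \<or> x1 \<otimes> x2 [^] (2::nat) = \<one>"
    using did2D[OF xc] pow4 x by auto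
  then show False
  proof
    assume "x1 \<otimes> x2 = \<one>"
    then show False using inv_eq_if_mult_eq_one[OF xc] inv_x1 x(4) by simp
  next
    assume "x1 \<otimes> x2 [^] (2::nat) = \<one>"
    then have "x2 [^] (2::nat) = x1 \<otimes> x1"
      using inv_eq_if_mult_eq_one[of x1 "x2 [^] (2::nat)"] xc inv_x1 by simp
    then have "x2 [^] (4::nat) = x1 [^] (4::nat)"
      using nat_pow_mult[OF xc(2), of 2 2] xc(1) by (simp add: numeral_eq_Suc m_assoc)
    then show False using pow4 x by simp
  qed
qed

lemma no_subgroup_of_card_9: "subgroup H G \<Longrightarrow> card H \<noteq> 9"
  using card_subgroup_exponent3_le_3 subgroup_pow3_if_coprime_4
  by (fastforce simp: coprime_iff_gcd_eq_1 gcd_non_0_nat)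

lemma order_cases: "order G \<in> {1, 2, 3, 4, 6, 8, 12, 24}"
proof (rule nat_in_divisors_24)
  show "0 < order G" "order G \<le> 24" using finite_carrier order_gt_0_iff_finite order_le_24 by auto
  show "\<not> 9 dvd order G" "\<not> 16 dvd order G"
    using exists_subgroup_card_prime_power[OF finite_carrier, of 3 2]
      exists_subgroup_card_prime_power[OF finite_carrier, of 2 4]
      no_subgroup_of_card_9 no_subgroup_of_card_16 by auto
  show "\<not> p dvd order G" if "prime p" "5 \<le> p" for p
    using exists_subgroup_card_prime_power[OF finite_carrier that(1), of 1]
      no_subgroup_of_large_prime_card[OF that] by auto
qed

lemma noncentral_involution_if_order_8:
  assumes "order G = 8"
  shows "\<exists>b\<in>carrier G. b \<otimes> b = \<one> \<and> b \<noteq> \<one> \<and> (\<exists>g\<in>carrier G. g \<otimes> b \<noteq> b \<otimes> g)"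
proof (rule ccontr)
  assume central: "\<not> ?thesis"
  have exp4: "\<forall>x\<in>carrier G. x [^] (4::nat) = \<one>"
    using subgroup_pow4_if_coprime_3[OF subgroup_self] assms
    by (simp add: order_def coprime_iff_gcd_eq_1 gcd_non_0_nat)
  define S where "S = {x \<in> carrier G. x \<otimes> x = \<one> \<and> x \<noteq> \<one>}"
  let ?Q = "{x \<in> carrier G. x \<otimes> x \<noteq> \<one>}"
  have "card (carrier G) \<le> card (insert \<one> (?Q \<union> S))"
    using finite_carrier by (intro card_mono) (auto simp: S_def)
  also have "\<dots> \<le> Suc (card (?Q \<union> S))" by (rule card_insert_le_m1) simp_all
  also have "\<dots> \<le> Suc (card ?Q + card S)" using card_Un_le[of ?Q S] by simp
  finally have "8 \<le> Suc (card ?Q + card S)" using assms by (simp add: order_def)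
  then have "card S \<ge> 5" using card_order4_elems_le_2[OF subgroup_self exp4] by linarith
  moreover have "card S \<le> 3"
    by (rule card_commuting_involutions_le_3) (use central in \<open>auto simp: S_def\<close>)
  ultimately show False by simp
qed

lemma exists_order4_elem_if_card_8:
  assumes "subgroup H G" "card H = 8"
  shows "\<exists>c\<in>H. c \<otimes> c \<noteq> \<one>"
proof (rule ccontr)
  assume "\<not> ?thesis"
  then have invol: "\<forall>x\<in>H. x \<otimes> x = \<one>" by blast
  have "card (H - {\<one>}) \<le> 3"
  proof (rule card_commuting_involutions_le_3)
    show "H - {\<one>} \<subseteq> carrier G" using assms(1) subgroup.subset by blast
    show "x \<otimes> x = \<one> \<and> x \<noteq> \<one>" if "x \<in> H - {\<one>}" for x using invol that by blast
    show "x \<otimes> y = y \<otimes> x" if "x \<in> H - {\<one>}" "y \<in> H - {\<one>}" for x y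
      using that invol subgroup.m_closed[OF assms(1)] subgroup.mem_carrier[OF assms(1)]
      by (intro involutions_commute) auto
  qed
  moreover have "card (H - {\<one>}) = 7"
    using card_Diff_singleton[OF subgroup.one_closed[OF assms(1)]] assms(2) by simp
  ultimately show False by simp
qed

lemma no_normal_subgroup_of_card_8:
  assumes P: "P \<lhd> G" "card P = 8"
    and a: "a \<in> carrier G" "a [^] (3::nat) = \<one>" "a \<noteq> \<one>"
  shows False
proof -
  have sub: "subgroup P G" using P(1) normal_imp_subgroup by blast
  have exp4: "\<forall>x\<in>P. x [^] (4::nat) = \<one>"
    using subgroup_pow4_if_coprime_3[OF sub] P(2) by (simp add: coprime_iff_gcd_eq_1 gcd_non_0_nat)
  obtain c where c: "c \<in> P" "c \<otimes> c \<noteq> \<one>" using exists_order4_elem_if_card_8[OF sub P(2)] by blast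
  have cc: "c \<in> carrier G" using subgroup.mem_carrier[OF sub c(1)] .
  have "conjugate G a c \<in> P" using P(1) a(1) c(1) by (simp add: normal_inv_iff conjugate_def)
  moreover have "conjugate G a c \<otimes> conjugate G a c \<noteq> \<one>"
    using c(2) a(1) cc conjugate_mult by (metis conjugate_eq_one_iff m_closed)
  ultimately consider "conjugate G a c = c" | "conjugate G a c = inv c"
    using order4_elems_eq_or_inv[OF sub exp4 c] by blast
  then show False
  proof cases
    case 1
    then have "c = \<one>"
      using commuting_pow4_of_order3[OF a cc] exp4 c(1) conjugate_eq_iff_commute[OF a(1) cc] by simp
    then show False using c(2) by simp
  next
    case 2
    have "conjugate G (a \<otimes> a \<otimes> a) c = conjugate G a (conjugate G a (conjugate G a c))"
      using a(1) cc by (simp add: conjugate_mult_left)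
    also have "\<dots> = inv c" using 2 a(1) cc by (simp add: conjugate_inv)
    finally have "c = inv c" using a cc by (simp add: nat_pow_three)
    then have "c \<otimes> c = \<one>" using cc by (metis r_inv)
    then show False using c(2) by simp
  qed
qed

lemma card_conjugacy_class_order3:
  assumes a: "a \<in> carrier G" "a [^] (3::nat) = \<one>" "a \<noteq> \<one>"
  shows "card {conjugate G g a | g. g \<in> carrier G} * 3 = order G"
proof -
  let ?\<phi> = "\<lambda>g. \<lambda>h\<in>carrier G. g \<otimes> h \<otimes> inv g"
  interpret A: group_action G "carrier G" ?\<phi> by (rule action_by_conjugation)
  have "orbit G ?\<phi> a = {conjugate G g a | g. g \<in> carrier G}"
    unfolding orbit_def conjugate_def using a(1) by simp
  moreover have "stabilizer G ?\<phi> a = {\<one>, a, inv a}"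
  proof -
    have "stabilizer G ?\<phi> a = {g \<in> carrier G. g \<otimes> a = a \<otimes> g}"
      using a(1) conjugate_eq_iff_commute by (auto simp: stabilizer_def conjugate_def)
    also have "\<dots> = {\<one>, a, inv a}"
      using centralizer_of_order3[OF a] a(1) by (auto simp: m_assoc)
    finally show ?thesis .
  qed
  ultimately show ?thesis
    using A.orbit_stabilizer_theorem[OF a(1)] card_cyclic_subgroup_order3[OF a] by simp
qed

lemma order3_elems_of_inv_normalizer:
  assumes a: "a \<in> carrier G" "a [^] (3::nat) = \<one>" "a \<noteq> \<one>"
    and x: "x \<in> inv_normalizer G a" "x [^] (3::nat) = \<one>" "x \<noteq> \<one>"
  shows "x = a \<or> x = inv a"
proof -
  have xc: "x \<in> carrier G" using x(1) by (simp add: inv_normalizer_def)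
  consider "conjugate G x a = a" | "conjugate G x a = inv a"
    using x(1) by (auto simp: inv_normalizer_def)
  then show ?thesis
  proof cases
    case 1
    then show ?thesis
      using centralizer_of_order3[OF a xc] conjugate_eq_iff_commute[OF xc a(1)] x(3) by simp
  next
    case 2
    have "conjugate G (x \<otimes> x \<otimes> x) a = conjugate G x (conjugate G x (conjugate G x a))"
      using xc a(1) by (simp add: conjugate_mult_left)
    also have "\<dots> = inv a" using 2 xc a(1) by (simp add: conjugate_inv)
    finally have "a = inv a" using x(2) xc a(1) by (simp add: nat_pow_three)
    then have "a \<otimes> a = \<one>" using a(1) by (metis r_inv)
    then have "a [^] (3::nat) = a" using a(1) by (simp add: nat_pow_three)
    then show ?thesis using a by simp
  qed
qed

lemma card_order3_elems_if_not_conjugate_to_inv: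
  assumes a: "a \<in> carrier G" "a [^] (3::nat) = \<one>" "a \<noteq> \<one>"
    and not_conj: "\<forall>y\<in>carrier G. conjugate G y a \<noteq> inv a"
  shows "2 * card {conjugate G g a | g. g \<in> carrier G}
    \<le> card {x \<in> carrier G. x [^] (3::nat) = \<one> \<and> x \<noteq> \<one>}"
proof -
  define C where "C = {conjugate G g a | g. g \<in> carrier G}"
  define T where "T = {x \<in> carrier G. x [^] (3::nat) = \<one> \<and> x \<noteq> \<one>}"
  have "conjugate G g a \<in> T \<and> inv (conjugate G g a) \<in> T" if "g \<in> carrier G" for g
  proof -
    have "conjugate G g a [^] (3::nat) = \<one>" using conjugate_nat_pow[OF that a(1), of 3] a(2) that by simp
    moreover have "conjugate G g a \<noteq> \<one>" using a that by simp
    ultimately show ?thesis using that a(1) by (simp add: T_def nat_pow_inv)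
  qed
  then have C_T: "C \<subseteq> T" "(\<lambda>x. inv x) ` C \<subseteq> T" unfolding C_def by auto
  have disj: "C \<inter> (\<lambda>x. inv x) ` C = {}"
  proof (rule ccontr)
    assume "C \<inter> (\<lambda>x. inv x) ` C \<noteq> {}"
    then obtain g h where gh: "g \<in> carrier G" "h \<in> carrier G" "conjugate G g a = inv (conjugate G h a)"
      unfolding C_def by blast
    then have "conjugate G (inv h \<otimes> g) a = inv a"
      using a(1) by (simp add: conjugate_mult_left conjugate_inv[symmetric] conjugate_inv_left)
    then show False using not_conj gh by (meson inv_closed m_closed)
  qed
  have "C \<subseteq> carrier G" using C_T(1) unfolding T_def by blast
  then have fin_C: "finite C" and "inj_on (\<lambda>x. inv x) C"
    using finite_carrier finite_subset inv_inj inj_on_subset by blast+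
  then have "card (C \<union> (\<lambda>x. inv x) ` C) = 2 * card C"
    using card_Un_disjoint[OF fin_C finite_imageI[OF fin_C] disj] card_image[of "\<lambda>x. inv x" C] by simp
  moreover have "card (C \<union> (\<lambda>x. inv x) ` C) \<le> card T"
    using C_T finite_carrier by (intro card_mono) (auto simp: T_def)
  ultimately show ?thesis unfolding C_def T_def by simp
qed

lemma normal_subgroup_of_card_8_if_order_24:
  assumes order: "order G = 24" and T: "16 \<le> card {x \<in> carrier G. x [^] (3::nat) = \<one> \<and> x \<noteq> \<one>}"
  shows "\<exists>Q. Q \<lhd> G \<and> card Q = 8"
proof -
  txt \<open>A Sylow 2-subgroup has exponent 4, and the set of all $x$ with $x^4 = 1$ avoids the 16
    elements of order 3; so this conjugation-invariant set has at most 8 elements and is the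
    Sylow subgroup.\<close>
  define P where "P = {x \<in> carrier G. x [^] (4::nat) = \<one>}"
  define T where "T = {x \<in> carrier G. x [^] (3::nat) = \<one> \<and> x \<noteq> \<one>}"
  obtain Q where Q: "subgroup Q G" "card Q = 8"
    using exists_subgroup_card_prime_power[OF finite_carrier, of 2 3] order by auto
  have "Q \<subseteq> P"
    using subgroup_pow4_if_coprime_3[OF Q(1)] Q subgroup.subset
    by (fastforce simp: P_def coprime_iff_gcd_eq_1 gcd_non_0_nat)
  have disj: "P \<inter> T = {}"
  proof -
    have "x = \<one>" if "x \<in> carrier G" "x [^] (4::nat) = \<one>" "x [^] (3::nat) = \<one>" for x
      using nat_pow_gcd_eq_one[OF that(1,3,2)] that(1) by (simp add: gcd_non_0_nat)
    then show ?thesis unfolding P_def T_def by blast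
  qed
  have fin: "finite P" "finite T" using finite_carrier by (simp_all add: P_def T_def)
  have "card P + card T = card (P \<union> T)" using card_Un_disjoint[OF fin disj] by simp
  also have "\<dots> \<le> card (carrier G)" using finite_carrier by (intro card_mono) (auto simp: P_def T_def)
  finally have "card P \<le> card Q" using T order Q(2) unfolding order_def T_def by simp
  then have "card Q = card P" using card_mono[OF fin(1) \<open>Q \<subseteq> P\<close>] by linarith
  then have "Q = P" by (rule card_subset_eq[OF fin(1) \<open>Q \<subseteq> P\<close>])
  moreover have "conjugate G g x \<in> P" if "g \<in> carrier G" "x \<in> P" for g x
    using that conjugate_nat_pow[OF that(1), of x 4] by (simp add: P_def)
  ultimately have "Q \<lhd> G" using Q(1) by (auto simp: normal_inv_iff conjugate_def)
  then show ?thesis using Q(2) by blast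
qed

lemma conjugate_to_inv_if_order_24:
  assumes a: "a \<in> carrier G" "a [^] (3::nat) = \<one>" "a \<noteq> \<one>" and order: "order G = 24"
  shows "\<exists>y\<in>carrier G. conjugate G y a = inv a"
proof (rule ccontr)
  assume "\<not> ?thesis"
  then have "16 \<le> card {x \<in> carrier G. x [^] (3::nat) = \<one> \<and> x \<noteq> \<one>}"
    using card_order3_elems_if_not_conjugate_to_inv[OF a] card_conjugacy_class_order3[OF a] order by simp
  then obtain Q where "Q \<lhd> G" "card Q = 8" using normal_subgroup_of_card_8_if_order_24 order by blast
  then show False using no_normal_subgroup_of_card_8 a by blast
qed

lemma card_inv_normalizer:
  assumes a: "a \<in> carrier G" "a [^] (3::nat) = \<one>" "a \<noteq> \<one>"
  shows "card (inv_normalizer G a) \<ge> 3"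
    and "(\<exists>y\<in>carrier G. conjugate G y a = inv a) \<Longrightarrow> card (inv_normalizer G a) \<ge> 6"
proof -
  let ?N = "inv_normalizer G a"
  define C where "C = {\<one>, a, inv a}"
  have fin: "finite ?N" using finite_carrier by (simp add: inv_normalizer_def)
  have C: "C \<subseteq> ?N" "C \<subseteq> carrier G" "finite C" "card C = 3"
    using cyclic_subgroup_subset_inv_normalizer[OF a(1)] a(1) card_cyclic_subgroup_order3[OF a]
    by (auto simp: C_def)
  then show "card ?N \<ge> 3" using card_mono[OF fin C(1)] by simp
  assume "\<exists>y\<in>carrier G. conjugate G y a = inv a"
  then obtain y where y: "y \<in> carrier G" "conjugate G y a = inv a" by blast
  then have yN: "y \<in> ?N" by (simp add: inv_normalizer_def)
  have comm: "conjugate G c a = a" if "c \<in> C" for c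
    using that a(1) by (auto simp: C_def conjugate_def m_assoc)
  define D where "D = (\<lambda>c. y \<otimes> c) ` C"
  have "D \<subseteq> ?N"
    using subgroup.m_closed[OF subgroup_inv_normalizer[OF a(1)] yN] C(1) unfolding D_def by blast
  have "y \<otimes> c \<notin> C" if "c \<in> C" for c
  proof
    assume "y \<otimes> c \<in> C"
    then have "conjugate G (y \<otimes> c) a = a" by (rule comm)
    moreover have "conjugate G (y \<otimes> c) a = inv a"
      using conjugate_mult_left[OF y(1) subsetD[OF C(2) that] a(1)] comm[OF that] y(2) by simp
    ultimately show False using C(4) unfolding C_def by (simp add: card_insert_if split: if_splits)
  qed
  then have disj: "C \<inter> D = {}" unfolding D_def by blast
  have "inj_on (\<lambda>c. y \<otimes> c) C" using y(1) C(2) by (intro inj_onI) (simp add: subset_iff)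
  then have "card (C \<union> D) = 6"
    using card_Un_disjoint[OF C(3) finite_imageI[OF C(3)] disj[unfolded D_def]]
      card_image[of "\<lambda>c. y \<otimes> c" C] C(4)
    unfolding D_def by simp
  moreover have "card (C \<union> D) \<le> card ?N" using fin C(1) \<open>D \<subseteq> ?N\<close> by (intro card_mono) auto
  ultimately show "card ?N \<ge> 6" by simp
qed

lemma conjugates_in_inv_normalizer_if_core:
  assumes a: "a \<in> carrier G" "a [^] (3::nat) = \<one>" "a \<noteq> \<one>"
    and k: "k \<in> inv_normalizer G a" "k \<noteq> \<one>" "\<forall>g\<in>carrier G. conjugate G g k \<in> inv_normalizer G a"
    and g: "g \<in> carrier G"
  shows "conjugate G g a \<in> inv_normalizer G a"
proof -
  let ?N = "inv_normalizer G a"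
  have N: "subgroup ?N G" using subgroup_inv_normalizer[OF a(1)] .
  have kc: "k \<in> carrier G" using k(1) by (simp add: inv_normalizer_def)
  consider "conjugate G k a = a" | "conjugate G k a = inv a"
    using k(1) by (auto simp: inv_normalizer_def)
  then show ?thesis
  proof cases
    case 1
    then have "k = a \<or> k = inv a"
      using centralizer_of_order3[OF a kc] conjugate_eq_iff_commute[OF kc a(1)] k(2) by auto
    then show ?thesis
      using k(3) g a(1) conjugate_inv subgroup.m_inv_closed[OF N] by (metis inv_inv conjugate_closed)
  next
    case 2
    txt \<open>Now $a = k z$ with $z = a k^{-1} a^{-1}$, and both factors lie in the core.\<close>
    define z where "z = conjugate G a (inv k)"
    have z: "z \<in> carrier G" "conjugate G g z = inv (conjugate G (g \<otimes> a) k)"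
      unfolding z_def using g a(1) kc by (simp_all add: conjugate_mult_left conjugate_inv)
    have "k \<otimes> z = conjugate G k a \<otimes> inv a"
      unfolding z_def using kc a(1) by (simp add: conjugate_def m_assoc)
    also have "\<dots> = inv (a \<otimes> a)" using 2 a(1) by (simp add: inv_mult_group)
    also have "\<dots> = a" using inv_of_pow3_eq_one a by (metis inv_inv)
    finally have "conjugate G g a = conjugate G g k \<otimes> inv (conjugate G (g \<otimes> a) k)"
      using g kc z conjugate_mult by metis
    then show ?thesis using k(3) g a(1) N by (simp add: subgroup.m_closed subgroup.m_inv_closed)
  qed
qed

lemma inv_normalizer_core_trivial:
  assumes a: "a \<in> carrier G" "a [^] (3::nat) = \<one>" "a \<noteq> \<one>" and big: "order G \<ge> 9"
    and k: "k \<in> inv_normalizer G a" "\<forall>g\<in>carrier G. conjugate G g k \<in> inv_normalizer G a"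
  shows "k = \<one>"
proof (rule ccontr)
  assume "k \<noteq> \<one>"
  have "conjugate G g a = a \<or> conjugate G g a = inv a" if g: "g \<in> carrier G" for g
  proof (rule order3_elems_of_inv_normalizer[OF a])
    show "conjugate G g a \<in> inv_normalizer G a"
      using conjugates_in_inv_normalizer_if_core[OF a k(1) \<open>k \<noteq> \<one>\<close> k(2) g] .
    show "conjugate G g a [^] (3::nat) = \<one>" using conjugate_nat_pow[OF g a(1), of 3] a(1,2) g by simp
    show "conjugate G g a \<noteq> \<one>" using a(1,3) g by simp
  qed
  then have "card {conjugate G g a | g. g \<in> carrier G} \<le> card {a, inv a}" by (intro card_mono) auto
  also have "\<dots> \<le> 2" by (simp add: card_insert_if)
  finally show False using card_conjugacy_class_order3[OF a] big by linarith
qed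

lemma inj_hom_sym_group_4: "\<exists>h. h \<in> hom G (sym_group 4) \<and> inj_on h (carrier G)"
proof -
  have a_exists: "\<exists>a\<in>carrier G. a \<noteq> \<one> \<and> a [^] (3::nat) = \<one>" if "3 dvd order G"
    using exists_elem_of_prime_order[OF finite_carrier _ that] by simp
  consider "order G \<le> 4" | "order G = 6" | "order G = 8" | "order G = 12 \<or> order G = 24"
    using order_cases by auto
  then show ?thesis
  proof cases
    case 1
    show ?thesis
      by (rule inj_hom_sym_group_4_if_index_le_4[OF finite_carrier triv_subgroup]) (use 1 in simp_all)
  next
    case 2
    obtain a where a: "a \<in> carrier G" "a \<noteq> \<one>" "a [^] (3::nat) = \<one>" using a_exists 2 by auto
    obtain b where b: "b \<in> carrier G" "b \<noteq> \<one>" "b [^] (2::nat) = \<one>"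
      using exists_elem_of_prime_order[OF finite_carrier, of 2] 2 by auto
    have "b [^] (4::nat) = \<one>" using b nat_pow_mod_period[of b 2 4] by simp
    then have "a \<otimes> b \<noteq> b \<otimes> a" using commuting_pow4_of_order3[of a b] a b by auto
    then show ?thesis
      using inj_hom_sym_group_4_if_noncentral_involution[OF finite_carrier, of b a] 2 a b
      by (simp add: nat_pow_two)
  next
    case 3
    then show ?thesis
      using noncentral_involution_if_order_8
        inj_hom_sym_group_4_if_noncentral_involution[OF finite_carrier]
      by auto
  next
    case 4
    obtain a where a: "a \<in> carrier G" "a [^] (3::nat) = \<one>" "a \<noteq> \<one>" using a_exists 4 by auto
    have "order G \<le> 4 * card (inv_normalizer G a)"
      using 4 card_inv_normalizer[OF a] conjugate_to_inv_if_order_24[OF a] by auto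
    then show ?thesis
      using inj_hom_sym_group_4_if_index_le_4[OF finite_carrier subgroup_inv_normalizer[OF a(1)]]
        inv_normalizer_core_trivial[OF a] 4 by auto
  qed
qed

end

theorem proposition4:
  fixes G :: "'a monoid"
  shows "S4_dbasis (sym_group 4)
         \<and> (group G \<and> S4_dbasis G \<longrightarrow> is_section_of G (sym_group 4))"
proof (intro conjI impI)
  show "S4_dbasis (sym_group 4)" by (rule S4_dbasis_sym_group_4)
  assume "group G \<and> S4_dbasis G"
  then interpret S4_dbasis_group G by (simp add: S4_dbasis_group_def S4_dbasis_group_axioms_def)
  obtain h where "h \<in> hom G (sym_group 4)" "inj_on h (carrier G)" using inj_hom_sym_group_4 by blast
  then show "is_section_of G (sym_group 4)" using inj_hom_is_section_of sym_group_is_group by blast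
qed

end
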